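(* For all $a,b\in\mathbb{R}$ with $|a|,|b|\le2$, \[ (1+\cos a)(1+\cos b)\ge 2+2\cos\big(\sqrt{a^2+b^2}\big), \] with equality only for $a=0$ or $b=0$. *)

theory Defs
  imports Complex_Main
begin

end

theory Submission
  imports Defs "HOL-Analysis.Complex_Transcendental"
begin

(* Since 1 + cos a = 2 cos(a/2)^2, for a, b \<noteq> 0 the claim reduces to
   cos (sqrt (x^2 + y^2)) < cos x * cos y with x = a/2, y = b/2, where x^2 + y^2 \<le> 2 < (pi/2)^2.
   For fixed y, the function t \<mapsto> cos t / cos (sqrt (t^2 + y^2)) is strictly increasing on t \<ge> 0:
   with R = sqrt (t^2 + y^2) > t its derivative has the sign of tan R / R - tan t / t, which is
   positive because tan t / t is strictly increasing on (0, pi/2). Comparing t = |x| with t = 0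
   gives the inequality. *)

lemma sin_mult_cos_less_self:
  fixes t :: real
  assumes "0 < t" "t < pi/2"
  shows "sin t * cos t < t"
proof -
  have "cos t < cos 0" using assms by (intro cos_monotone_0_pi) auto
  then have "sin t * cos t < sin t" using sin_gt_zero2[OF assms] by simp
  also have "\<dots> \<le> t" using assms by (intro sin_x_le_x) simp
  finally show ?thesis .
qed

lemma tan_div_self_strict_mono:
  fixes s t :: real
  assumes "0 < s" "s < t" "t < pi/2"
  shows "tan s / s < tan t / t"
proof (rule DERIV_pos_imp_increasing[OF \<open>s < t\<close>])
  fix u assume "s \<le> u" "u \<le> t"
  then have u: "0 < u" "u < pi/2" using assms by auto
  have cos_pos: "0 < cos u" using cos_gt_zero[OF u] .
  have "((\<lambda>u. tan u / u) has_real_derivative (u - sin u * cos u) / (u * cos u)\<^sup>2) (at u)"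
    using cos_pos u
    by (auto intro!: derivative_eq_intros simp: tan_def power2_eq_square field_simps)
      (simp add: distrib_left[symmetric])
  moreover have "(u - sin u * cos u) / (u * cos u)\<^sup>2 > 0"
    using sin_mult_cos_less_self[OF u] u cos_pos by simp
  ultimately show "\<exists>D. ((\<lambda>u. tan u / u) has_real_derivative D) (at u) \<and> D > 0" by blast
qed

lemma cos_div_cos_sqrt_strict_mono:
  fixes c s t :: real
  assumes "0 < c" "0 \<le> s" "s < t" "t\<^sup>2 + c < (pi/2)\<^sup>2"
  shows "cos s / cos (sqrt (s\<^sup>2 + c)) < cos t / cos (sqrt (t\<^sup>2 + c))"
proof (rule DERIV_pos_imp_increasing_open[OF \<open>s < t\<close>])
  have radius_bounds: "u < sqrt (u\<^sup>2 + c) \<and> sqrt (u\<^sup>2 + c) < pi/2" if "0 \<le> u" "u \<le> t" for u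
  proof -
    have "u\<^sup>2 + c \<le> t\<^sup>2 + c" using that by (simp add: power_mono)
    then have "sqrt (u\<^sup>2 + c) < sqrt ((pi/2)\<^sup>2)"
      using assms(4) by (subst real_sqrt_less_iff) linarith
    moreover have "sqrt (u\<^sup>2) < sqrt (u\<^sup>2 + c)"
      using assms(1) by (subst real_sqrt_less_iff) linarith
    ultimately show ?thesis using that by simp
  qed
  have cos_radius_pos: "0 < cos (sqrt (u\<^sup>2 + c))" if "0 \<le> u" "u \<le> t" for u
    using radius_bounds[OF that] that by (intro cos_gt_zero) linarith+
  show "continuous_on {s..t} (\<lambda>u. cos u / cos (sqrt (u\<^sup>2 + c)))"
    using cos_radius_pos assms(2) by (intro continuous_intros) (auto simp: less_imp_neq[symmetric])
  fix u assume "s < u" "u < t"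
  then have u: "0 < u" "u \<le> t" using assms(2) by auto
  define R where "R = sqrt (u\<^sup>2 + c)"
  have "u < R" "R < pi/2" using radius_bounds[of u] u unfolding R_def by auto
  have cos_R: "0 < cos R" using cos_radius_pos[of u] u unfolding R_def by auto
  have cos_u: "0 < cos u" using \<open>u < R\<close> \<open>R < pi/2\<close> u by (intro cos_gt_zero) auto
  have "((\<lambda>u. cos u / cos (sqrt (u\<^sup>2 + c))) has_real_derivative
      (cos u * sin R * u / R - sin u * cos R) / (cos R)\<^sup>2) (at u)"
    using cos_R u \<open>u < R\<close> add_nonneg_pos[OF zero_le_power2 assms(1), of u]
    unfolding R_def
    by (auto intro!: derivative_eq_intros simp: power2_eq_square field_simps)
  moreover have "(cos u * sin R * u / R - sin u * cos R) / (cos R)\<^sup>2 > 0"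
  proof -
    have "tan u / u < tan R / R"
      using u \<open>u < R\<close> \<open>R < pi/2\<close> by (intro tan_div_self_strict_mono)
    then have "sin u * cos R * R < cos u * sin R * u"
      using cos_u cos_R u \<open>u < R\<close> by (simp add: tan_def field_simps)
    then show ?thesis using cos_R u \<open>u < R\<close> by (simp add: field_simps)
  qed
  ultimately show "\<exists>D. ((\<lambda>u. cos u / cos (sqrt (u\<^sup>2 + c))) has_real_derivative D) (at u) \<and> D > 0"
    by blast
qed

lemma cos_sqrt_sum_squares_pos:
  fixes x y :: real
  assumes "x\<^sup>2 + y\<^sup>2 < (pi/2)\<^sup>2"
  shows "0 < cos (sqrt (x\<^sup>2 + y\<^sup>2))"
proof -
  have "sqrt (x\<^sup>2 + y\<^sup>2) < sqrt ((pi/2)\<^sup>2)"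
    using assms by (subst real_sqrt_less_iff)
  then have "sqrt (x\<^sup>2 + y\<^sup>2) < pi/2" by simp
  then show ?thesis
    using pi_gt_zero real_sqrt_ge_zero[OF sum_power2_ge_zero[of x y]]
    by (intro cos_gt_zero_pi) linarith+
qed

lemma cos_sqrt_sum_squares_less_cos_mult:
  fixes x y :: real
  assumes "x \<noteq> 0" "y \<noteq> 0" "x\<^sup>2 + y\<^sup>2 < (pi/2)\<^sup>2"
  shows "cos (sqrt (x\<^sup>2 + y\<^sup>2)) < cos x * cos y"
proof -
  have "cos 0 / cos (sqrt (0\<^sup>2 + y\<^sup>2)) < cos \<bar>x\<bar> / cos (sqrt (\<bar>x\<bar>\<^sup>2 + y\<^sup>2))"
    using assms by (intro cos_div_cos_sqrt_strict_mono) auto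
  then have "1 / cos y < cos x / cos (sqrt (x\<^sup>2 + y\<^sup>2))"
    by simp
  moreover have "0 < cos y"
  proof -
    have "y\<^sup>2 < (pi/2)\<^sup>2" using assms(3) zero_le_power2[of x] by linarith
    then show ?thesis using cos_sqrt_sum_squares_pos[of 0 y] by simp
  qed
  moreover have "0 < cos (sqrt (x\<^sup>2 + y\<^sup>2))"
    using cos_sqrt_sum_squares_pos[OF assms(3)] .
  ultimately show ?thesis by (simp add: field_simps)
qed

lemma one_plus_cos_eq: "1 + cos x = 2 * (cos (x/2))\<^sup>2" for x :: real
  using cos_double_cos[of "x/2"] by simp

theorem lemma3p3:
  fixes a b :: real
  assumes "\<bar>a\<bar> \<le> 2" and "\<bar>b\<bar> \<le> 2"
  shows "(1 + cos a) * (1 + cos b) \<ge> 2 + 2 * cos (sqrt (a\<^sup>2 + b\<^sup>2)) \<and>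
         ((1 + cos a) * (1 + cos b) = 2 + 2 * cos (sqrt (a\<^sup>2 + b\<^sup>2)) \<longrightarrow> a = 0 \<or> b = 0)"
proof (cases "a = 0 \<or> b = 0")
  case True
  then show ?thesis by (auto simp: algebra_simps)
next
  case False
  define R where "R = sqrt ((a/2)\<^sup>2 + (b/2)\<^sup>2)"
  have "a\<^sup>2 \<le> 2\<^sup>2" "b\<^sup>2 \<le> 2\<^sup>2"
    using power_mono[OF assms(1) abs_ge_zero, of 2] power_mono[OF assms(2) abs_ge_zero, of 2]
    by simp_all
  then have "(a/2)\<^sup>2 + (b/2)\<^sup>2 \<le> 2"
    by (simp add: power_divide)
  also have "\<dots> < (3/2)\<^sup>2"
    by (simp add: power2_eq_square)
  also have "\<dots> < (pi/2)\<^sup>2"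
    using pi_gt3 by (intro power_strict_mono) auto
  finally have "0 < cos R" and "cos R < cos (a/2) * cos (b/2)"
    using False cos_sqrt_sum_squares_pos cos_sqrt_sum_squares_less_cos_mult unfolding R_def
    by auto
  then have "(cos R)\<^sup>2 < (cos (a/2) * cos (b/2))\<^sup>2"
    by (intro power_strict_mono) auto
  moreover have "sqrt (a\<^sup>2 + b\<^sup>2) = 2 * R"
  proof -
    have "a\<^sup>2 + b\<^sup>2 = (2 * R)\<^sup>2"
      unfolding R_def by (simp add: power_mult_distrib power_divide)
    then have "sqrt (a\<^sup>2 + b\<^sup>2) = \<bar>2 * R\<bar>" by (simp only: real_sqrt_abs)
    then show ?thesis by (simp add: R_def)
  qed
  ultimately have "2 + 2 * cos (sqrt (a\<^sup>2 + b\<^sup>2)) < (1 + cos a) * (1 + cos b)"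
    by (simp add: one_plus_cos_eq cos_double_cos power_mult_distrib)
  then show ?thesis by simp
qed

end
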